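(* For every countable two-sorted ultrametric space $X$ there is a uniformly continuous dc-embedding $e\colon X\to\mathbb U$.
   Context: A two-sorted ultrametric space is $(X,d_X,D_X)$ with $D_X$ a linear order with least element $0$, $d_X\colon X\times X\to D_X$ symmetric, $d_X(x,y)=0\iff x=y$, $d_X(x,z)\le\max\{d_X(x,y),d_X(y,z)\}$; countable means both $X$ and $D_X$ are countable. A dc-embedding $f\colon X\to Y$ is an injection on points with an order embedding $D_f\colon D_X\to D_Y$ fixing $0$ such that $d_Y(f(x),f(x'))=D_f(d_X(x,x'))$. The uniformity of $X$ is generated by the partitions $\{B_r(a):a\in X\}$, $B_r(a)=\{x:d(x,a)<r\}$, $r\in D_X\setminus\{0\}$; uniform continuity is with respect to these uniformities. $\mathbb U$ is the countable rational Urysohn ultrametric space (the unique countable ultrametric space with distances in $\mathbb Q_{\ge0}$ that is universal for finite rational ultrametric spaces and in which every isometry between finite subsets extends to a global isometry), viewed as a two-sorted space with distance set $\mathbb Q_{\ge0}$; equivalently the Fraïssé limit of finite two-sorted ultrametric spaces with dc-embeddings. *)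

theory Defs
  imports "HOL-Library.Countable_Set" HOL.Rat
begin

text \<open>A two-sorted ultrametric space: point carrier X, distance carrier D (a subset of a
linearly ordered type, with the induced order), least element z (the distance 0), distance d.\<close>
definition ts_ultrametric :: "'a set \<Rightarrow> 'd::linorder set \<Rightarrow> 'd \<Rightarrow> ('a \<Rightarrow> 'a \<Rightarrow> 'd) \<Rightarrow> bool" where
  "ts_ultrametric X D z d \<longleftrightarrow>
     z \<in> D \<and> (\<forall>r\<in>D. z \<le> r) \<and>
     (\<forall>x\<in>X. \<forall>y\<in>X. d x y \<in> D \<and> d x y = d y x \<and> (d x y = z \<longleftrightarrow> x = y)) \<and>
     (\<forall>x\<in>X. \<forall>y\<in>X. \<forall>w\<in>X. d x w \<le> max (d x y) (d y w))"

definition countable_ts_ultrametric :: "'a set \<Rightarrow> 'd::linorder set \<Rightarrow> 'd \<Rightarrow> ('a \<Rightarrow> 'a \<Rightarrow> 'd) \<Rightarrow> bool" where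
  "countable_ts_ultrametric X D z d \<longleftrightarrow> ts_ultrametric X D z d \<and> countable X \<and> countable D"

definition dc_embedding ::
  "'a set \<Rightarrow> 'd::linorder set \<Rightarrow> 'd \<Rightarrow> ('a \<Rightarrow> 'a \<Rightarrow> 'd) \<Rightarrow>
   'b set \<Rightarrow> 'e::linorder set \<Rightarrow> 'e \<Rightarrow> ('b \<Rightarrow> 'b \<Rightarrow> 'e) \<Rightarrow>
   ('a \<Rightarrow> 'b) \<Rightarrow> ('d \<Rightarrow> 'e) \<Rightarrow> bool" where
  "dc_embedding X D z d Y E zE dY f Df \<longleftrightarrow>
     inj_on f X \<and> f ` X \<subseteq> Y \<and>
     Df ` D \<subseteq> E \<and> (\<forall>r\<in>D. \<forall>s\<in>D. r < s \<longrightarrow> Df r < Df s) \<and> Df z = zE \<and>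
     (\<forall>x\<in>X. \<forall>x'\<in>X. dY (f x) (f x') = Df (d x x'))"

text \<open>The entourage associated with the partition into open balls of radius r.\<close>
definition ball_entourage :: "'a set \<Rightarrow> ('a \<Rightarrow> 'a \<Rightarrow> 'd::linorder) \<Rightarrow> 'd \<Rightarrow> ('a \<times> 'a) set" where
  "ball_entourage X d r = {(x, y). x \<in> X \<and> y \<in> X \<and> d x y < r}"

definition ts_uniformity :: "'a set \<Rightarrow> 'd::linorder set \<Rightarrow> 'd \<Rightarrow> ('a \<Rightarrow> 'a \<Rightarrow> 'd) \<Rightarrow> ('a \<times> 'a) set set" where
  "ts_uniformity X D z d =
     {V. V \<subseteq> X \<times> X \<and> (\<exists>F. finite F \<and> F \<subseteq> D - {z} \<and>
            (X \<times> X) \<inter> (\<Inter>r\<in>F. ball_entourage X d r) \<subseteq> V)}"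

definition ts_uniformly_continuous ::
  "'a set \<Rightarrow> 'd::linorder set \<Rightarrow> 'd \<Rightarrow> ('a \<Rightarrow> 'a \<Rightarrow> 'd) \<Rightarrow>
   'b set \<Rightarrow> 'e::linorder set \<Rightarrow> 'e \<Rightarrow> ('b \<Rightarrow> 'b \<Rightarrow> 'e) \<Rightarrow> ('a \<Rightarrow> 'b) \<Rightarrow> bool" where
  "ts_uniformly_continuous X D z d Y E zE dY f \<longleftrightarrow>
     (\<forall>V \<in> ts_uniformity Y E zE dY.
        {(x, x'). x \<in> X \<and> x' \<in> X \<and> (f x, f x') \<in> V} \<in> ts_uniformity X D z d)"

definition rat_ultrametric :: "'a set \<Rightarrow> ('a \<Rightarrow> 'a \<Rightarrow> rat) \<Rightarrow> bool" where
  "rat_ultrametric X d \<longleftrightarrow> ts_ultrametric X {q. 0 \<le> q} 0 d"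

text \<open>Characterisation of the countable rational Urysohn ultrametric space
(unique up to isometry): countable, rational ultrametric, universal for finite rational
ultrametric spaces (represented on subsets of nat), and ultrahomogeneous.\<close>
definition rational_urysohn_ultrametric :: "'u set \<Rightarrow> ('u \<Rightarrow> 'u \<Rightarrow> rat) \<Rightarrow> bool" where
  "rational_urysohn_ultrametric U du \<longleftrightarrow>
     countable U \<and> rat_ultrametric U du \<and>
     (\<forall>(F :: nat set) dF. finite F \<and> rat_ultrametric F dF \<longrightarrow>
        (\<exists>g. inj_on g F \<and> g ` F \<subseteq> U \<and> (\<forall>x\<in>F. \<forall>y\<in>F. du (g x) (g y) = dF x y))) \<and>
     (\<forall>A B h. finite A \<and> A \<subseteq> U \<and> B \<subseteq> U \<and> bij_betw h A B \<and>
        (\<forall>x\<in>A. \<forall>y\<in>A. du (h x) (h y) = du x y) \<longrightarrow>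
        (\<exists>g. bij_betw g U U \<and> (\<forall>x\<in>U. \<forall>y\<in>U. du (g x) (g y) = du x y) \<and> (\<forall>x\<in>A. g x = h x)))"

end

theory Submission
  imports Defs
begin

text \<open>The distance sort is first transported into the rationals. The countable chain
\<open>D - {0}\<close> is embedded into the positive rationals greedily along an enumeration: the
\<open>n\<close>-th element receives a value in the gap cut out by the values of the earlier elements,
and if it lies below all of them the value is also chosen below \<open>1/(n+1)\<close>. When
\<open>D - {0}\<close> has no least element such record lows occur infinitely often, so the values
accumulate at \<open>0\<close>; this is exactly what makes the resulting embedding uniformly continuous.
Composing \<open>d\<close> with this order embedding gives a countable rational ultrametric, which is
mapped isometrically into \<open>U\<close> point by point: by universality a finite
subspace plus one new point embeds into \<open>U\<close>, and homogeneity moves that copy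
onto the part already constructed, which realises every one-point extension.\<close>

section \<open>Coherent choices along an enumeration\<close>

lemma dependent_choice_on_chain:
  fixes S :: "nat \<Rightarrow> 'a set" and P :: "nat \<Rightarrow> ('a \<Rightarrow> 'b) \<Rightarrow> bool"
  assumes chain: "\<And>n. S n \<subseteq> S (Suc n)"
    and locality: "\<And>n f g. (\<And>x. x \<in> S n \<Longrightarrow> f x = g x) \<Longrightarrow> P n f \<Longrightarrow> P n g"
    and start: "\<exists>f. P 0 f"
    and step: "\<And>n f. P n f \<Longrightarrow> \<exists>g. P (Suc n) g \<and> (\<forall>x\<in>S n. g x = f x)"
  shows "\<exists>e. \<forall>n. P n e"
proof -
  have "\<exists>F. \<forall>n. P n (F n) \<and> (\<forall>x\<in>S n. F (Suc n) x = F n x)"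
    using start step by (rule dependent_nat_choice)
  then obtain F where F: "\<And>n. P n (F n)" and F_Suc: "\<And>n x. x \<in> S n \<Longrightarrow> F (Suc n) x = F n x"
    by blast
  have coherent: "F m x = F n x" if "x \<in> S n" "n \<le> m" for x n m
    using that(2)
  proof (induction m rule: dec_induct)
    case (step k)
    have "x \<in> S k" using lift_Suc_mono_le[of S, OF chain step.hyps(1)] that(1) by blast
    then show ?case using F_Suc[of x k] step.IH by simp
  qed simp
  define e where "e x = F (LEAST n. x \<in> S n) x" for x
  have "e x = F n x" if "x \<in> S n" for n x
  proof -
    have "x \<in> S (LEAST n. x \<in> S n)" "(LEAST n. x \<in> S n) \<le> n"
      using that by (auto intro: LeastI Least_le)
    then show ?thesis unfolding e_def by (rule coherent[symmetric])
  qed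
  then have "P n e" for n
    using locality[of n "F n" e] F by metis
  then show ?thesis by blast
qed

definition enum_segment :: "'a set \<Rightarrow> nat \<Rightarrow> 'a set" where
  "enum_segment X n = {x \<in> X. to_nat_on X x < n}"

lemma enum_segment_0 [simp]: "enum_segment X 0 = {}"
  by (simp add: enum_segment_def)

lemma enum_segment_subset: "enum_segment X n \<subseteq> X"
  by (auto simp: enum_segment_def)

lemma enum_segment_mono: "enum_segment X n \<subseteq> enum_segment X (Suc n)"
  by (auto simp: enum_segment_def)

lemma mem_enum_segment_Suc_to_nat_on: "x \<in> X \<Longrightarrow> x \<in> enum_segment X (Suc (to_nat_on X x))"
  by (simp add: enum_segment_def)

lemma finite_enum_segment:
  assumes "countable X"
  shows "finite (enum_segment X n)"
proof (rule finite_imageD)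
  show "finite (to_nat_on X ` enum_segment X n)"
    by (rule finite_subset[of _ "{..<n}"]) (auto simp: enum_segment_def)
  show "inj_on (to_nat_on X) (enum_segment X n)"
    using inj_on_to_nat_on[OF assms] enum_segment_subset by (rule inj_on_subset)
qed

lemma enum_segment_Suc_cases:
  assumes "countable X"
  obtains "enum_segment X (Suc n) = enum_segment X n"
  | t where "t \<in> X" "to_nat_on X t = n" "enum_segment X (Suc n) = insert t (enum_segment X n)"
proof (cases "\<exists>t\<in>X. to_nat_on X t = n")
  case True
  then obtain t where t: "t \<in> X" "to_nat_on X t = n" by blast
  have "enum_segment X (Suc (to_nat_on X t)) = insert t (enum_segment X (to_nat_on X t))"
    using t(1) to_nat_on_inj[OF assms] by (auto simp: enum_segment_def less_Suc_eq)
  with t that(2) show ?thesis by simp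
next
  case False
  then have "enum_segment X (Suc n) = enum_segment X n"
    by (auto simp: enum_segment_def less_Suc_eq)
  with that(1) show ?thesis .
qed

section \<open>Rescaling the distances into the rationals\<close>

lemma exists_between_finite_sets:
  fixes L H :: "'a::{dense_linorder, no_top} set"
  assumes "finite L" "finite H" "L \<noteq> {}" "\<And>l h. l \<in> L \<Longrightarrow> h \<in> H \<Longrightarrow> l < h"
  shows "\<exists>v. (\<forall>l\<in>L. l < v) \<and> (\<forall>h\<in>H. v < h)"
proof (cases "H = {}")
  case True
  obtain v where "Max L < v" using gt_ex by blast
  then show ?thesis using True assms(1) by (meson Max_ge le_less_trans empty_iff)
next
  case False
  have "Max L < Min H" using assms False by simp
  then obtain v where "Max L < v" "v < Min H" using dense by blast
  then show ?thesis using assms(1,2) by (meson Max_ge Min_le le_less_trans less_le_trans)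
qed

lemma rat_gap_extension:
  fixes A :: "'d::linorder set" and f :: "'d \<Rightarrow> rat"
  assumes "finite A" and f_pos: "\<forall>s\<in>A. 0 < f s" and f_mono: "\<forall>s\<in>A. \<forall>s'\<in>A. s < s' \<longrightarrow> f s < f s'"
    and "0 < b"
  shows "\<exists>v. 0 < v \<and> (\<forall>s\<in>A. s < t \<longrightarrow> f s < v) \<and> (\<forall>s\<in>A. t < s \<longrightarrow> v < f s) \<and>
    ((\<forall>s\<in>A. t < s) \<longrightarrow> v < b)"
proof -
  let ?L = "insert 0 (f ` {s \<in> A. s < t})"
  let ?H = "f ` {s \<in> A. t < s} \<union> (if \<forall>s\<in>A. t < s then {b} else {})"
  have "\<exists>v. (\<forall>l\<in>?L. l < v) \<and> (\<forall>h\<in>?H. v < h)"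
  proof (rule exists_between_finite_sets)
    show "finite ?L" "finite ?H" "?L \<noteq> {}" using \<open>finite A\<close> by auto
    fix l h assume l: "l \<in> ?L" and h: "h \<in> ?H"
    have "0 < h" using h f_pos \<open>0 < b\<close> by (auto split: if_splits)
    moreover have "f s < h" if "s \<in> A" "s < t" for s
      using h that f_mono by (auto split: if_splits dest: less_trans less_asym)
    ultimately show "l < h" using l by blast
  qed
  then show ?thesis by auto
qed

definition enum_record_low :: "'a::linorder set \<Rightarrow> 'a \<Rightarrow> bool" where
  "enum_record_low T t \<longleftrightarrow> (\<forall>s\<in>enum_segment T (to_nat_on T t). t < s)"

lemma greedy_order_embedding_rat:
  fixes T :: "'d::linorder set"
  assumes "countable T"
  shows "\<exists>\<phi>::'d \<Rightarrow> rat. (\<forall>t\<in>T. 0 < \<phi> t) \<and> (\<forall>s\<in>T. \<forall>t\<in>T. s < t \<longrightarrow> \<phi> s < \<phi> t) \<and>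
    (\<forall>t\<in>T. enum_record_low T t \<longrightarrow> \<phi> t < 1 / (of_nat (to_nat_on T t) + 1))"
proof -
  let ?S = "enum_segment T" and ?idx = "to_nat_on T"
  define P where "P n \<phi> \<longleftrightarrow> (\<forall>t\<in>?S n. 0 < \<phi> t) \<and> (\<forall>s\<in>?S n. \<forall>t\<in>?S n. s < t \<longrightarrow> \<phi> s < \<phi> t) \<and>
      (\<forall>t\<in>?S n. enum_record_low T t \<longrightarrow> \<phi> t < 1 / (of_nat (?idx t) + 1))"
    for n and \<phi> :: "'d \<Rightarrow> rat"
  have "\<exists>\<phi>. \<forall>n. P n \<phi>"
  proof (rule dependent_choice_on_chain[of ?S, OF enum_segment_mono])
    show "P n g" if "\<And>x. x \<in> ?S n \<Longrightarrow> f x = g x" "P n f" for n f g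
      using that unfolding P_def by simp
    show "\<exists>f. P 0 f" by (simp add: P_def)
  next
    fix n f assume f: "P n f"
    show "\<exists>g. P (Suc n) g \<and> (\<forall>x\<in>?S n. g x = f x)"
      using enum_segment_Suc_cases[OF assms, of n]
    proof cases
      case 1
      then show ?thesis using f unfolding P_def by auto
    next
      case (2 t)
      have t_new: "t \<notin> ?S n" using 2 by (simp add: enum_segment_def)
      have low_iff: "enum_record_low T t \<longleftrightarrow> (\<forall>s\<in>?S n. t < s)"
        using 2(2) by (simp add: enum_record_low_def)
      obtain v where "0 < v" and v_low: "\<forall>s\<in>?S n. s < t \<longrightarrow> f s < v"
        and v_high: "\<forall>s\<in>?S n. t < s \<longrightarrow> v < f s"
        and v_bound: "(\<forall>s\<in>?S n. t < s) \<longrightarrow> v < 1 / (of_nat n + 1)"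
        using rat_gap_extension[OF finite_enum_segment[OF assms, of n], where f = f and b = "1 / (of_nat n + 1)" and t = t] f
        unfolding P_def by auto
      have "P (Suc n) (f(t := v))"
        using f t_new \<open>0 < v\<close> v_low v_high v_bound low_iff 2(2)
        unfolding P_def 2(3) by auto
      then show ?thesis using t_new by auto
    qed
  qed
  then obtain \<phi> where \<phi>: "\<And>n. P n \<phi>" by blast
  have in_segment: "s \<in> ?S (Suc (max (?idx s) (?idx t)))" "t \<in> ?S (Suc (max (?idx s) (?idx t)))"
    if "s \<in> T" "t \<in> T" for s t
    using that by (auto simp: enum_segment_def)
  show ?thesis
    using \<phi> in_segment unfolding P_def by (intro exI[of _ \<phi>]) blast
qed

lemma enum_record_low_unbounded:
  fixes T :: "'d::linorder set"
  assumes "countable T" "T \<noteq> {}" and no_least: "\<forall>m\<in>T. \<exists>t\<in>T. t < m"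
  shows "\<exists>t\<in>T. enum_record_low T t \<and> n \<le> to_nat_on T t"
proof -
  let ?S = "enum_segment T" and ?idx = "to_nat_on T"
  define B where "B = {t \<in> T. \<forall>s\<in>?S n. t < s}"
  have "B \<noteq> {}"
  proof (cases "?S n = {}")
    case True
    then show ?thesis using \<open>T \<noteq> {}\<close> by (auto simp: B_def)
  next
    case False
    have "Min (?S n) \<in> T"
      using Min_in[OF finite_enum_segment[OF assms(1)] False] enum_segment_subset[of T] by blast
    then obtain t where "t \<in> T" "t < Min (?S n)" using no_least by blast
    then have "t \<in> B"
      unfolding B_def using finite_enum_segment[OF assms(1)] by (auto intro: less_le_trans)
    then show ?thesis by blast
  qed
  then obtain t where t: "t \<in> B" and t_least: "\<And>s. s \<in> B \<Longrightarrow> ?idx t \<le> ?idx s"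
    using ex_has_least_nat[of "\<lambda>t. t \<in> B" _ ?idx] by blast
  have "t \<in> T" using t by (simp add: B_def)
  have "enum_record_low T t"
    unfolding enum_record_low_def
  proof
    fix s assume "s \<in> ?S (?idx t)"
    then have "s \<in> T" "?idx s < ?idx t" by (auto simp: enum_segment_def)
    show "t < s"
    proof (rule ccontr)
      assume "\<not> t < s"
      then have "s < t" using \<open>?idx s < ?idx t\<close> by (metis linorder_neqE nat_neq_iff)
      then have "s \<in> B" using t \<open>s \<in> T\<close> unfolding B_def by (auto intro: less_trans)
      then show False using t_least \<open>?idx s < ?idx t\<close> by fastforce
    qed
  qed
  moreover have "n \<le> ?idx t"
  proof (rule ccontr)
    assume "\<not> n \<le> ?idx t"
    then have "t \<in> ?S n" using \<open>t \<in> T\<close> by (simp add: enum_segment_def)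
    then show False using t by (auto simp: B_def)
  qed
  ultimately show ?thesis using \<open>t \<in> T\<close> by blast
qed

lemma countable_order_embedding_rat:
  fixes T :: "'d::linorder set"
  assumes "countable T"
  shows "\<exists>\<phi>::'d \<Rightarrow> rat. (\<forall>t\<in>T. 0 < \<phi> t) \<and> (\<forall>s\<in>T. \<forall>t\<in>T. s < t \<longrightarrow> \<phi> s < \<phi> t) \<and>
    (T \<noteq> {} \<longrightarrow> (\<forall>m\<in>T. \<exists>t\<in>T. t < m) \<longrightarrow> (\<forall>r>0. \<exists>t\<in>T. \<phi> t < r))"
proof -
  obtain \<phi> :: "'d \<Rightarrow> rat" where \<phi>_pos: "\<forall>t\<in>T. 0 < \<phi> t"
    and \<phi>_mono: "\<forall>s\<in>T. \<forall>t\<in>T. s < t \<longrightarrow> \<phi> s < \<phi> t"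
    and \<phi>_low: "\<forall>t\<in>T. enum_record_low T t \<longrightarrow> \<phi> t < 1 / (of_nat (to_nat_on T t) + 1)"
    using greedy_order_embedding_rat[OF assms] by blast
  have "\<exists>t\<in>T. \<phi> t < r" if T: "T \<noteq> {}" "\<forall>m\<in>T. \<exists>t\<in>T. t < m" and "0 < r" for r
  proof -
    obtain n where n: "inverse (of_nat (Suc n)) < r" using reals_Archimedean[OF \<open>0 < r\<close>] by blast
    obtain t where "t \<in> T" "enum_record_low T t" "Suc n \<le> to_nat_on T t"
      using enum_record_low_unbounded[OF assms T] by blast
    then have "\<phi> t < 1 / (of_nat (to_nat_on T t) + 1)" using \<phi>_low by blast
    also have "\<dots> \<le> inverse (of_nat (Suc n))"
      using \<open>Suc n \<le> to_nat_on T t\<close> by (simp add: inverse_eq_divide frac_le)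
    finally show ?thesis using n \<open>t \<in> T\<close> by (meson less_trans)
  qed
  then show ?thesis using \<phi>_pos \<phi>_mono by blast
qed

lemma countable_distance_set_embedding_rat:
  fixes D :: "'d::linorder set"
  assumes "z \<in> D" and z_least: "\<forall>r\<in>D. z \<le> r" and "countable D"
  shows "\<exists>De::'d \<Rightarrow> rat. De z = 0 \<and> (\<forall>r\<in>D. 0 \<le> De r) \<and> (\<forall>r\<in>D. \<forall>s\<in>D. r < s \<longrightarrow> De r < De s) \<and>
    (\<forall>r>0. \<exists>F. finite F \<and> F \<subseteq> D - {z} \<and> (\<forall>t\<in>D. (\<forall>f\<in>F. t < f) \<longrightarrow> De t < r))"
proof -
  let ?T = "D - {z}"
  have "countable ?T" using \<open>countable D\<close> by simp
  then obtain \<phi> :: "'d \<Rightarrow> rat" where \<phi>_pos: "\<forall>t\<in>?T. 0 < \<phi> t"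
    and \<phi>_mono: "\<forall>s\<in>?T. \<forall>t\<in>?T. s < t \<longrightarrow> \<phi> s < \<phi> t"
    and \<phi>_inf: "?T \<noteq> {} \<longrightarrow> (\<forall>m\<in>?T. \<exists>t\<in>?T. t < m) \<longrightarrow> (\<forall>r>0. \<exists>t\<in>?T. \<phi> t < r)"
    using countable_order_embedding_rat[of ?T] by blast
  define De where "De = \<phi>(z := 0)"
  have De_mono: "De r < De s" if "r \<in> D" "s \<in> D" "r < s" for r s
    using that \<phi>_pos \<phi>_mono z_least by (auto simp: De_def dest: order.strict_trans1)
  have De_small: "\<exists>F. finite F \<and> F \<subseteq> ?T \<and> (\<forall>t\<in>D. (\<forall>f\<in>F. t < f) \<longrightarrow> De t < r)"
    if "0 < r" for r
  proof (cases "?T = {}")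
    case True
    then show ?thesis using \<open>0 < r\<close> by (auto simp: De_def intro!: exI[of _ "{}"])
  next
    case False
    have "\<exists>s\<in>?T. \<forall>t\<in>?T. t < s \<longrightarrow> \<phi> t < r"
    proof (cases "\<forall>m\<in>?T. \<exists>t\<in>?T. t < m")
      case True
      then obtain s where "s \<in> ?T" "\<phi> s < r" using \<phi>_inf False \<open>0 < r\<close> by blast
      then show ?thesis using \<phi>_mono by (meson less_trans)
    next
      case False
      then obtain s where "s \<in> ?T" "\<forall>t\<in>?T. \<not> t < s" by blast
      then show ?thesis by blast
    qed
    then obtain s where "s \<in> ?T" "\<forall>t\<in>?T. t < s \<longrightarrow> \<phi> t < r" by blast
    then show ?thesis using \<open>0 < r\<close> by (intro exI[of _ "{s}"]) (auto simp: De_def)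
  qed
  have De_nonneg: "0 \<le> De r" if "r \<in> D" for r
    using that \<phi>_pos by (auto simp: De_def less_imp_le)
  have "De z = 0" by (simp add: De_def)
  with De_nonneg De_mono De_small show ?thesis by blast
qed

lemma ts_uniformly_continuous_if_distance_map:
  assumes dist_D: "\<And>x x'. x \<in> X \<Longrightarrow> x' \<in> X \<Longrightarrow> d x x' \<in> D"
    and e_Y: "e ` X \<subseteq> Y"
    and e_dist: "\<And>x x'. x \<in> X \<Longrightarrow> x' \<in> X \<Longrightarrow> dY (e x) (e x') = De (d x x')"
    and De_small: "\<And>r. r \<in> E - {zE} \<Longrightarrow>
      \<exists>F. finite F \<and> F \<subseteq> D - {z} \<and> (\<forall>t\<in>D. (\<forall>f\<in>F. t < f) \<longrightarrow> De t < r)"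
  shows "ts_uniformly_continuous X D z d Y E zE dY e"
  unfolding ts_uniformly_continuous_def
proof
  fix V assume "V \<in> ts_uniformity Y E zE dY"
  then obtain G where "finite G" "G \<subseteq> E - {zE}"
    and G_V: "(Y \<times> Y) \<inter> (\<Inter>r\<in>G. ball_entourage Y dY r) \<subseteq> V"
    unfolding ts_uniformity_def by blast
  then have "\<forall>r\<in>G. \<exists>F. finite F \<and> F \<subseteq> D - {z} \<and> (\<forall>t\<in>D. (\<forall>f\<in>F. t < f) \<longrightarrow> De t < r)"
    by (intro ballI De_small) blast
  then obtain F where F: "\<And>r. r \<in> G \<Longrightarrow> finite (F r) \<and> F r \<subseteq> D - {z} \<and>
      (\<forall>t\<in>D. (\<forall>f\<in>F r. t < f) \<longrightarrow> De t < r)"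
    by (metis bchoice)
  let ?W = "{(x, x'). x \<in> X \<and> x' \<in> X \<and> (e x, e x') \<in> V}"
  have "(x, x') \<in> ?W" if "x \<in> X" "x' \<in> X" and near: "\<forall>f\<in>\<Union>(F ` G). d x x' < f" for x x'
  proof -
    have "dY (e x) (e x') < r" if "r \<in> G" for r
      using F[OF that] near dist_D e_dist \<open>x \<in> X\<close> \<open>x' \<in> X\<close> that by auto
    then have "(e x, e x') \<in> (Y \<times> Y) \<inter> (\<Inter>r\<in>G. ball_entourage Y dY r)"
      using e_Y \<open>x \<in> X\<close> \<open>x' \<in> X\<close> by (auto simp: ball_entourage_def)
    then show ?thesis using G_V \<open>x \<in> X\<close> \<open>x' \<in> X\<close> by blast
  qed
  then have "(X \<times> X) \<inter> (\<Inter>f\<in>\<Union>(F ` G). ball_entourage X d f) \<subseteq> ?W"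
    by (auto simp: ball_entourage_def)
  moreover have "finite (\<Union>(F ` G))" "\<Union>(F ` G) \<subseteq> D - {z}" using F \<open>finite G\<close> by auto
  ultimately show "?W \<in> ts_uniformity X D z d"
    unfolding ts_uniformity_def by blast
qed

lemma rat_ultrametric_rescale:
  fixes De :: "'d::linorder \<Rightarrow> rat"
  assumes X: "ts_ultrametric X D z d" and "De z = 0"
    and De_mono: "\<forall>r\<in>D. \<forall>s\<in>D. r < s \<longrightarrow> De r < De s"
  shows "rat_ultrametric X (\<lambda>x y. De (d x y))"
proof -
  have z: "z \<in> D" "\<forall>r\<in>D. z \<le> r" using X unfolding ts_ultrametric_def by auto
  have De_le: "De r \<le> De s" if "r \<in> D" "s \<in> D" "r \<le> s" for r s
    using De_mono that by (cases "r = s") (auto simp: less_imp_le)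
  have De_pos: "0 < De r" if "r \<in> D" "r \<noteq> z" for r
    using De_mono z that \<open>De z = 0\<close> by (metis order.not_eq_order_implies_strict)
  have De_max: "De (max r s) = max (De r) (De s)" if "r \<in> D" "s \<in> D" for r s
    using De_le[of r s] De_le[of s r] that by (cases "r \<le> s") (auto simp: max_def)
  show ?thesis
    unfolding rat_ultrametric_def ts_ultrametric_def
  proof (intro conjI ballI)
    fix x y assume "x \<in> X" "y \<in> X"
    then have "d x y \<in> D" "d x y = d y x" "d x y = z \<longleftrightarrow> x = y"
      using X unfolding ts_ultrametric_def by blast+
    then show "De (d x y) \<in> {q. 0 \<le> q}" "De (d x y) = De (d y x)" "De (d x y) = 0 \<longleftrightarrow> x = y"
      using De_le[of z "d x y"] De_pos[of "d x y"] z \<open>De z = 0\<close> by auto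
  next
    fix x y w assume "x \<in> X" "y \<in> X" "w \<in> X"
    then have "d x w \<in> D" "d x y \<in> D" "d y w \<in> D" "d x w \<le> max (d x y) (d y w)"
      using X unfolding ts_ultrametric_def by blast+
    moreover from this have "max (d x y) (d y w) \<in> D" by (simp add: max_def)
    ultimately show "De (d x w) \<le> max (De (d x y)) (De (d y w))"
      using De_le[of "d x w" "max (d x y) (d y w)"] De_max[of "d x y" "d y w"] by simp
  qed simp_all
qed

section \<open>Isometric embeddings into the rational Urysohn space\<close>

lemma ts_ultrametric_subset: "ts_ultrametric X D z d \<Longrightarrow> Y \<subseteq> X \<Longrightarrow> ts_ultrametric Y D z d"
  unfolding ts_ultrametric_def by blast

lemma ts_ultrametric_pullback:
  assumes "ts_ultrametric X D z d" "inj_on h Y" "h ` Y \<subseteq> X"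
  shows "ts_ultrametric Y D z (\<lambda>a b. d (h a) (h b))"
proof -
  have "h a \<in> X" if "a \<in> Y" for a using assms(3) that by blast
  with assms(1,2) show ?thesis unfolding ts_ultrametric_def inj_on_def by auto
qed

lemma ts_ultrametric_sym: "ts_ultrametric X D z d \<Longrightarrow> x \<in> X \<Longrightarrow> y \<in> X \<Longrightarrow> d x y = d y x"
  unfolding ts_ultrametric_def by blast

lemma ts_ultrametric_self: "ts_ultrametric X D z d \<Longrightarrow> x \<in> X \<Longrightarrow> d x x = z"
  unfolding ts_ultrametric_def by blast

definition isometric_into :: "'a set \<Rightarrow> ('a \<Rightarrow> 'a \<Rightarrow> 'r) \<Rightarrow> 'b set \<Rightarrow> ('b \<Rightarrow> 'b \<Rightarrow> 'r) \<Rightarrow> ('a \<Rightarrow> 'b) \<Rightarrow> bool"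
  where "isometric_into A dA B dB f \<longleftrightarrow> f ` A \<subseteq> B \<and> (\<forall>x\<in>A. \<forall>y\<in>A. dB (f x) (f y) = dA x y)"

lemma isometric_into_subset: "isometric_into A dA B dB f \<Longrightarrow> A' \<subseteq> A \<Longrightarrow> isometric_into A' dA B dB f"
  unfolding isometric_into_def by blast

lemma isometric_into_cong:
  "(\<And>x. x \<in> A \<Longrightarrow> f x = g x) \<Longrightarrow> isometric_into A dA B dB f \<Longrightarrow> isometric_into A dA B dB g"
  unfolding isometric_into_def by (simp add: image_subset_iff)

lemma ts_ultrametric_isometric_inj_on:
  assumes "ts_ultrametric X D z d" "ts_ultrametric Y E z dY" "isometric_into X d Y dY f"
  shows "inj_on f X"
proof (rule inj_onI)
  fix x x' assume "x \<in> X" "x' \<in> X" "f x = f x'"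
  then have "d x x' = dY (f x') (f x')" using assms(3) unfolding isometric_into_def by metis
  also have "\<dots> = z"
    using ts_ultrametric_self[OF assms(2)] assms(3) \<open>x' \<in> X\<close> unfolding isometric_into_def by blast
  finally show "x = x'" using assms(1) \<open>x \<in> X\<close> \<open>x' \<in> X\<close> unfolding ts_ultrametric_def by blast
qed

lemma rational_urysohn_ultrametricD:
  assumes "rational_urysohn_ultrametric U du"
  shows urysohn_rat_ultrametric: "rat_ultrametric U du"
    and urysohn_universal_nat: "\<And>F :: nat set. \<And>dF. finite F \<Longrightarrow> rat_ultrametric F dF \<Longrightarrow>
      \<exists>g. inj_on g F \<and> g ` F \<subseteq> U \<and> (\<forall>x\<in>F. \<forall>y\<in>F. du (g x) (g y) = dF x y)"
    and urysohn_homogeneous: "\<And>A B h. finite A \<Longrightarrow> A \<subseteq> U \<Longrightarrow> B \<subseteq> U \<Longrightarrow> bij_betw h A B \<Longrightarrow>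
      (\<forall>x\<in>A. \<forall>y\<in>A. du (h x) (h y) = du x y) \<Longrightarrow>
      \<exists>g. bij_betw g U U \<and> (\<forall>x\<in>U. \<forall>y\<in>U. du (g x) (g y) = du x y) \<and> (\<forall>x\<in>A. g x = h x)"
  using assms unfolding rational_urysohn_ultrametric_def by simp_all

lemma urysohn_universal_finite:
  fixes F :: "'a set" and dF :: "'a \<Rightarrow> 'a \<Rightarrow> rat"
  assumes U: "rational_urysohn_ultrametric U du" and "finite F" "rat_ultrametric F dF"
  shows "\<exists>g. isometric_into F dF U du g"
proof -
  let ?N = "{..<card F}" and ?\<nu> = "from_nat_into F"
  have \<nu>: "bij_betw ?\<nu> ?N F" using \<open>finite F\<close> by (rule bij_betw_from_nat_into_finite)
  have inj: "inj_on ?\<nu> ?N" and img: "?\<nu> ` ?N \<subseteq> F" using \<nu> by (simp_all add: bij_betw_def)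
  have "rat_ultrametric ?N (\<lambda>i j. dF (?\<nu> i) (?\<nu> j))"
    using ts_ultrametric_pullback[OF assms(3)[unfolded rat_ultrametric_def] inj img]
    by (simp add: rat_ultrametric_def)
  then obtain g where gU: "g ` ?N \<subseteq> U" and g: "\<forall>i\<in>?N. \<forall>j\<in>?N. du (g i) (g j) = dF (?\<nu> i) (?\<nu> j)"
    using urysohn_universal_nat[OF U, of ?N] by blast
  have inv: "inv_into ?N ?\<nu> x \<in> ?N" "?\<nu> (inv_into ?N ?\<nu> x) = x" if "x \<in> F" for x
    using bij_betwE[OF bij_betw_inv_into[OF \<nu>]] bij_betw_inv_into_right[OF \<nu>] that by simp_all
  have "isometric_into F dF U du (g \<circ> inv_into ?N ?\<nu>)"
    unfolding isometric_into_def using gU g inv by auto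
  then show ?thesis by blast
qed

lemma urysohn_one_point_extension:
  fixes \<delta> :: "'a \<Rightarrow> 'a \<Rightarrow> rat"
  assumes U: "rational_urysohn_ultrametric U du" and X: "rat_ultrametric X \<delta>"
    and "finite A" "A \<subseteq> X" "x \<in> X" and f: "isometric_into A \<delta> U du f"
  shows "\<exists>u\<in>U. \<forall>a\<in>A. du u (f a) = \<delta> x a"
proof -
  have U_metric: "ts_ultrametric U {q. 0 \<le> q} 0 du"
    using urysohn_rat_ultrametric[OF U] by (simp add: rat_ultrametric_def)
  have A_metric: "ts_ultrametric A {q. 0 \<le> q} 0 \<delta>"
    using X \<open>A \<subseteq> X\<close> unfolding rat_ultrametric_def by (rule ts_ultrametric_subset)
  have "rat_ultrametric (insert x A) \<delta>"
    using X \<open>A \<subseteq> X\<close> \<open>x \<in> X\<close> unfolding rat_ultrametric_def by (simp add: ts_ultrametric_subset)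
  then obtain g where g: "isometric_into (insert x A) \<delta> U du g"
    using urysohn_universal_finite[OF U] \<open>finite A\<close> by blast
  then have g_A: "isometric_into A \<delta> U du g" by (rule isometric_into_subset) blast
  have g_inj: "inj_on g A" using A_metric U_metric g_A by (rule ts_ultrametric_isometric_inj_on)
  have f_inj: "inj_on f A" using A_metric U_metric f by (rule ts_ultrametric_isometric_inj_on)
  define h where "h = f \<circ> inv_into A g"
  have h_g: "h (g a) = f a" if "a \<in> A" for a
    using g_inj that by (simp add: h_def)
  have "bij_betw h (g ` A) (f ` A)"
    unfolding h_def
    using bij_betw_trans[OF bij_betw_inv_into[OF inj_on_imp_bij_betw[OF g_inj]] inj_on_imp_bij_betw[OF f_inj]] .
  moreover have "\<forall>p\<in>g ` A. \<forall>q\<in>g ` A. du (h p) (h q) = du p q"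
    using h_g f g_A unfolding isometric_into_def by auto
  ultimately obtain \<phi> where \<phi>_iso: "\<forall>p\<in>U. \<forall>q\<in>U. du (\<phi> p) (\<phi> q) = du p q"
    and \<phi>_U: "bij_betw \<phi> U U" and \<phi>_h: "\<forall>p\<in>g ` A. \<phi> p = h p"
    using urysohn_homogeneous[OF U, of "g ` A" "f ` A" h] \<open>finite A\<close> f g_A
    unfolding isometric_into_def by auto
  have gU: "g a \<in> U" if "a \<in> insert x A" for a
    using g that unfolding isometric_into_def by auto
  have "du (\<phi> (g x)) (f a) = \<delta> x a" if "a \<in> A" for a
  proof -
    have "du (\<phi> (g x)) (f a) = du (\<phi> (g x)) (\<phi> (g a))" using \<phi>_h h_g that by simp
    also have "\<dots> = du (g x) (g a)" using \<phi>_iso gU that by simp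
    also have "\<dots> = \<delta> x a" using g that unfolding isometric_into_def by simp
    finally show ?thesis .
  qed
  moreover have "\<phi> (g x) \<in> U" using \<phi>_U gU[of x] by (simp add: bij_betwE)
  ultimately show ?thesis by blast
qed

lemma urysohn_extend_isometric_into:
  fixes \<delta> :: "'a \<Rightarrow> 'a \<Rightarrow> rat"
  assumes U: "rational_urysohn_ultrametric U du" and X: "rat_ultrametric X \<delta>"
    and "finite A" "A \<subseteq> X" "x \<in> X" "x \<notin> A" and f: "isometric_into A \<delta> U du f"
  shows "\<exists>u. isometric_into (insert x A) \<delta> U du (f(x := u))"
proof -
  obtain u where "u \<in> U" and u: "\<forall>a\<in>A. du u (f a) = \<delta> x a"
    using urysohn_one_point_extension[OF U X \<open>finite A\<close> \<open>A \<subseteq> X\<close> \<open>x \<in> X\<close> f] by blast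
  have U_metric: "ts_ultrametric U {q. 0 \<le> q} 0 du"
    using urysohn_rat_ultrametric[OF U] by (simp add: rat_ultrametric_def)
  have X_metric: "ts_ultrametric X {q. 0 \<le> q} 0 \<delta>"
    using X by (simp add: rat_ultrametric_def)
  have "du (f a) u = \<delta> a x" if "a \<in> A" for a
    using u that f \<open>u \<in> U\<close> \<open>x \<in> X\<close> \<open>A \<subseteq> X\<close> ts_ultrametric_sym[OF U_metric] ts_ultrametric_sym[OF X_metric]
    unfolding isometric_into_def by (metis image_subset_iff subsetD)
  moreover have "du u u = \<delta> x x"
    using ts_ultrametric_self[OF U_metric \<open>u \<in> U\<close>] ts_ultrametric_self[OF X_metric \<open>x \<in> X\<close>] by simp
  ultimately have "isometric_into (insert x A) \<delta> U du (f(x := u))"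
    using f u \<open>u \<in> U\<close> \<open>x \<notin> A\<close> unfolding isometric_into_def by auto
  then show ?thesis by blast
qed

lemma urysohn_embeds_countable:
  fixes \<delta> :: "'a \<Rightarrow> 'a \<Rightarrow> rat"
  assumes U: "rational_urysohn_ultrametric U du" and "countable X" and X: "rat_ultrametric X \<delta>"
  shows "\<exists>e. isometric_into X \<delta> U du e"
proof -
  let ?S = "enum_segment X"
  have "\<exists>e. \<forall>n. isometric_into (?S n) \<delta> U du e"
  proof (rule dependent_choice_on_chain[of ?S, OF enum_segment_mono])
    show "isometric_into (?S n) \<delta> U du g" if "\<And>x. x \<in> ?S n \<Longrightarrow> f x = g x"
      "isometric_into (?S n) \<delta> U du f" for n f g
      using that by (rule isometric_into_cong)
    show "\<exists>f. isometric_into (?S 0) \<delta> U du f" by (simp add: isometric_into_def)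
  next
    fix n f assume f: "isometric_into (?S n) \<delta> U du f"
    show "\<exists>g. isometric_into (?S (Suc n)) \<delta> U du g \<and> (\<forall>x\<in>?S n. g x = f x)"
      using enum_segment_Suc_cases[OF \<open>countable X\<close>, of n]
    proof cases
      case 1
      then show ?thesis using f by auto
    next
      case (2 t)
      have "t \<notin> ?S n" using 2 by (simp add: enum_segment_def)
      then obtain u where "isometric_into (?S (Suc n)) \<delta> U du (f(t := u))"
        using urysohn_extend_isometric_into[OF U X finite_enum_segment[OF \<open>countable X\<close>]
            enum_segment_subset \<open>t \<in> X\<close> _ f] 2(3) by auto
      then show ?thesis using \<open>t \<notin> ?S n\<close> by auto
    qed
  qed
  then obtain e where e: "\<And>n. isometric_into (?S n) \<delta> U du e" by blast
  have pair: "isometric_into {x, y} \<delta> U du e" if "x \<in> X" "y \<in> X" for x y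
    using e[of "Suc (max (to_nat_on X x) (to_nat_on X y))"]
    by (rule isometric_into_subset) (use that in \<open>auto simp: enum_segment_def\<close>)
  have "isometric_into X \<delta> U du e"
    unfolding isometric_into_def
  proof (intro conjI ballI image_subsetI)
    show "e x \<in> U" if "x \<in> X" for x
      using pair[OF that that] unfolding isometric_into_def by simp
    show "du (e x) (e y) = \<delta> x y" if "x \<in> X" "y \<in> X" for x y
      using pair[OF that] unfolding isometric_into_def by simp
  qed
  then show ?thesis by blast
qed

theorem proposition3p21:
  fixes X :: "'a set" and D :: "'d::linorder set" and z :: 'd and d :: "'a \<Rightarrow> 'a \<Rightarrow> 'd"
    and U :: "'u set" and du :: "'u \<Rightarrow> 'u \<Rightarrow> rat"
  assumes "countable_ts_ultrametric X D z d"
    and "rational_urysohn_ultrametric U du"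
  shows "\<exists>e De. dc_embedding X D z d U {q. 0 \<le> q} 0 du e De \<and>
                ts_uniformly_continuous X D z d U {q. 0 \<le> q} 0 du e"
proof -
  have X: "ts_ultrametric X D z d" "countable X" "countable D"
    using assms(1) unfolding countable_ts_ultrametric_def by auto
  then have "z \<in> D" "\<forall>r\<in>D. z \<le> r" and dist_D: "\<And>x y. x \<in> X \<Longrightarrow> y \<in> X \<Longrightarrow> d x y \<in> D"
    unfolding ts_ultrametric_def by auto
  then obtain De :: "'d \<Rightarrow> rat" where "De z = 0" and De_nonneg: "\<forall>r\<in>D. 0 \<le> De r"
    and De_mono: "\<forall>r\<in>D. \<forall>s\<in>D. r < s \<longrightarrow> De r < De s"
    and De_small: "\<forall>r>0. \<exists>F. finite F \<and> F \<subseteq> D - {z} \<and> (\<forall>t\<in>D. (\<forall>f\<in>F. t < f) \<longrightarrow> De t < r)"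
    using countable_distance_set_embedding_rat[of z D] \<open>countable D\<close> by blast
  have \<delta>: "rat_ultrametric X (\<lambda>x y. De (d x y))"
    using X(1) \<open>De z = 0\<close> De_mono by (rule rat_ultrametric_rescale)
  obtain e where e: "isometric_into X (\<lambda>x y. De (d x y)) U du e"
    using urysohn_embeds_countable[OF assms(2) X(2) \<delta>] by blast
  then have eU: "e ` X \<subseteq> U" and e_iso: "\<forall>x\<in>X. \<forall>y\<in>X. du (e x) (e y) = De (d x y)"
    unfolding isometric_into_def by simp_all
  have "inj_on e X"
    using \<delta> urysohn_rat_ultrametric[OF assms(2)] e
    unfolding rat_ultrametric_def by (rule ts_ultrametric_isometric_inj_on)
  then have "dc_embedding X D z d U {q. 0 \<le> q} 0 du e De"
    unfolding dc_embedding_def using eU De_nonneg De_mono \<open>De z = 0\<close> e_iso by blast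
  moreover have "ts_uniformly_continuous X D z d U {q. 0 \<le> q} 0 du e"
  proof (rule ts_uniformly_continuous_if_distance_map[OF dist_D eU])
    show "du (e x) (e x') = De (d x x')" if "x \<in> X" "x' \<in> X" for x x'
      using e_iso that by blast
    show "\<exists>F. finite F \<and> F \<subseteq> D - {z} \<and> (\<forall>t\<in>D. (\<forall>f\<in>F. t < f) \<longrightarrow> De t < r)"
      if "r \<in> {q. 0 \<le> q} - {0}" for r
      using De_small that by simp
  qed
  ultimately show ?thesis by blast
qed

end
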